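(* If $R$ is a prime right almost perfect ring, then $R$ is $h$-local.
   Context: Rings are associative with identity $1\neq 0$. A ring $R$ is called right almost perfect if $R/I$ is a right perfect ring for every two-sided ideal $I$ of $R$ with $I\neq 0$ and $I\neq R$. A ring is semilocal if $R/J(R)$ is semisimple artinian, where $J(R)$ is the Jacobson radical. A (prime) ring $R$ is called $h$-local if: (1) for every non-zero proper two-sided ideal $I$ of $R$, the factor ring $R/I$ is semilocal; and (2) every non-zero prime two-sided ideal of $R$ is contained in only one maximal two-sided ideal of $R$. *)

theory Defs
  imports "HOL-Algebra.QuotRing"
begin

(* Noncommutative rings via the HOL-Algebra locale ring; "ideal" = two-sided ideal. *)

definition right_ideal :: "'a set \<Rightarrow> ('a, 'b) ring_scheme \<Rightarrow> bool" where
  "right_ideal I R \<longleftrightarrow> additive_subgroup I R \<and>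
     (\<forall>a\<in>I. \<forall>x\<in>carrier R. a \<otimes>\<^bsub>R\<^esub> x \<in> I)"

definition maximal_right_ideal :: "'a set \<Rightarrow> ('a, 'b) ring_scheme \<Rightarrow> bool" where
  "maximal_right_ideal M R \<longleftrightarrow> right_ideal M R \<and> M \<noteq> carrier R \<and>
     (\<forall>I. right_ideal I R \<and> M \<subseteq> I \<longrightarrow> I = M \<or> I = carrier R)"

definition jacobson :: "('a, 'b) ring_scheme \<Rightarrow> 'a set" where
  "jacobson R = carrier R \<inter> \<Inter> {M. maximal_right_ideal M R}"

definition right_artinian :: "('a, 'b) ring_scheme \<Rightarrow> bool" where
  "right_artinian R \<longleftrightarrow> (\<forall>f :: nat \<Rightarrow> 'a set.
     (\<forall>n. right_ideal (f n) R) \<and> (\<forall>n. f (Suc n) \<subseteq> f n) \<longrightarrow>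
     (\<exists>n. \<forall>m\<ge>n. f m = f n))"

definition semisimple_artinian :: "('a, 'b) ring_scheme \<Rightarrow> bool" where
  "semisimple_artinian R \<longleftrightarrow> right_artinian R \<and> jacobson R = {\<zero>\<^bsub>R\<^esub>}"

definition semilocal :: "('a, 'b) ring_scheme \<Rightarrow> bool" where
  "semilocal R \<longleftrightarrow> semisimple_artinian (R Quot (jacobson R))"

(* product a_n ... a_1 of a sequence (a_1, a_2, ...) given as a : nat \<Rightarrow> 'a, indices from 1 *)
fun rprod :: "('a, 'b) ring_scheme \<Rightarrow> (nat \<Rightarrow> 'a) \<Rightarrow> nat \<Rightarrow> 'a" where
  "rprod R a 0 = \<one>\<^bsub>R\<^esub>"
| "rprod R a (Suc n) = a (Suc n) \<otimes>\<^bsub>R\<^esub> rprod R a n"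

(* T-nilpotence in the sense needed for right perfect rings:
   for every sequence a_1, a_2, ... in I, a_n ... a_2 a_1 = 0 for some n *)
definition T_nilpotent_for_right_modules :: "'a set \<Rightarrow> ('a, 'b) ring_scheme \<Rightarrow> bool" where
  "T_nilpotent_for_right_modules I R \<longleftrightarrow>
     (\<forall>a. (\<forall>n\<ge>1. a n \<in> I) \<longrightarrow> (\<exists>n\<ge>1. rprod R a n = \<zero>\<^bsub>R\<^esub>))"

(* Bass: R is right perfect iff R/J(R) is semisimple artinian and J(R) is T-nilpotent
   in the above sense (equivalently MJ \<noteq> M for every nonzero right module M) *)
definition right_perfect :: "('a, 'b) ring_scheme \<Rightarrow> bool" where
  "right_perfect R \<longleftrightarrow> semilocal R \<and> T_nilpotent_for_right_modules (jacobson R) R"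

definition right_almost_perfect :: "('a, 'b) ring_scheme \<Rightarrow> bool" where
  "right_almost_perfect R \<longleftrightarrow>
     (\<forall>I. ideal I R \<and> I \<noteq> {\<zero>\<^bsub>R\<^esub>} \<and> I \<noteq> carrier R \<longrightarrow> right_perfect (R Quot I))"

definition prime_ideal :: "'a set \<Rightarrow> ('a, 'b) ring_scheme \<Rightarrow> bool" where
  "prime_ideal P R \<longleftrightarrow> ideal P R \<and> P \<noteq> carrier R \<and>
     (\<forall>A B. ideal A R \<and> ideal B R \<and> (\<forall>a\<in>A. \<forall>b\<in>B. a \<otimes>\<^bsub>R\<^esub> b \<in> P)
        \<longrightarrow> A \<subseteq> P \<or> B \<subseteq> P)"

definition prime_ring :: "('a, 'b) ring_scheme \<Rightarrow> bool" where
  "prime_ring R \<longleftrightarrow> prime_ideal {\<zero>\<^bsub>R\<^esub>} R"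

definition maximal_two_sided_ideal :: "'a set \<Rightarrow> ('a, 'b) ring_scheme \<Rightarrow> bool" where
  "maximal_two_sided_ideal M R \<longleftrightarrow> ideal M R \<and> M \<noteq> carrier R \<and>
     (\<forall>I. ideal I R \<and> M \<subseteq> I \<longrightarrow> I = M \<or> I = carrier R)"

definition h_local :: "('a, 'b) ring_scheme \<Rightarrow> bool" where
  "h_local R \<longleftrightarrow>
     (\<forall>I. ideal I R \<and> I \<noteq> {\<zero>\<^bsub>R\<^esub>} \<and> I \<noteq> carrier R \<longrightarrow> semilocal (R Quot I)) \<and>
     (\<forall>P. prime_ideal P R \<and> P \<noteq> {\<zero>\<^bsub>R\<^esub>} \<longrightarrow>
        (\<exists>!M. maximal_two_sided_ideal M R \<and> P \<subseteq> M))"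

end

theory Submission
  imports Defs
begin

text \<open>For a nonzero prime ideal P the factor ring R/P is prime and, R being right almost perfect,
  right perfect. In a prime ring every T-nilpotent right ideal vanishes, so J(R/P) = 0 and R/P is
  right artinian. A prime right artinian ring is simple: an idempotent of a nonzero ideal whose
  right annihilator is minimal must be 1, by Brauer's lemma on minimal right ideals. Thus P is a
  maximal ideal and the only maximal ideal containing P; semilocality of the proper factor rings
  is part of right perfectness.\<close>

lemma (in ring) right_idealI:
  assumes "I \<subseteq> carrier R" "\<zero> \<in> I"
    and "\<And>a b. a \<in> I \<Longrightarrow> b \<in> I \<Longrightarrow> a \<oplus> b \<in> I"
    and "\<And>a. a \<in> I \<Longrightarrow> \<ominus> a \<in> I"
    and "\<And>a x. a \<in> I \<Longrightarrow> x \<in> carrier R \<Longrightarrow> a \<otimes> x \<in> I"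
  shows "right_ideal I R"
  unfolding right_ideal_def additive_subgroup_def
  using assms by (auto intro!: add.subgroupI simp: a_inv_def[symmetric])

lemma (in ring) right_idealD:
  assumes "right_ideal I R"
  shows "I \<subseteq> carrier R" "\<zero> \<in> I"
    and "\<And>a b. a \<in> I \<Longrightarrow> b \<in> I \<Longrightarrow> a \<oplus> b \<in> I"
    and "\<And>a. a \<in> I \<Longrightarrow> \<ominus> a \<in> I"
    and "\<And>a x. a \<in> I \<Longrightarrow> x \<in> carrier R \<Longrightarrow> a \<otimes> x \<in> I"
  using assms unfolding right_ideal_def
  by (auto intro: additive_subgroup.a_Hcarr additive_subgroup.zero_closed
      additive_subgroup.a_closed additive_subgroup.a_inv_closed)

lemma (in ring) right_ideal_if_ideal: "ideal I R \<Longrightarrow> right_ideal I R"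
  unfolding right_ideal_def by (auto intro: ideal.axioms(1) ideal.I_r_closed)

lemma (in ring) right_ideal_jacobson: "right_ideal (jacobson R) R"
  unfolding jacobson_def maximal_right_ideal_def
  by (rule right_idealI) (auto dest: right_idealD)

lemma (in ring) zero_in_jacobson: "\<zero> \<in> jacobson R"
  using right_idealD(2)[OF right_ideal_jacobson] .

lemma (in ring) right_ideal_Int:
  "right_ideal A R \<Longrightarrow> right_ideal B R \<Longrightarrow> right_ideal (A \<inter> B) R"
  by (rule right_idealI) (auto dest: right_idealD)

lemma (in ring) right_ideal_right_annihilator_singleton:
  assumes "x \<in> carrier R"
  shows "right_ideal {z \<in> carrier R. x \<otimes> z = \<zero>} R"
  using assms by (intro right_idealI) (auto simp: r_distr r_minus m_assoc[symmetric])

lemma (in ring) right_ideal_left_mult_image: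
  assumes x: "x \<in> carrier R" and L: "right_ideal L R"
  shows "right_ideal ((\<otimes>) x ` L) R"
proof -
  note Ld = right_idealD[OF L]
  have [simp]: "l \<in> L \<Longrightarrow> l \<in> carrier R" for l using Ld(1) by blast
  show ?thesis
  proof (rule right_idealI)
    show "(\<otimes>) x ` L \<subseteq> carrier R" using x by auto
    show "\<zero> \<in> (\<otimes>) x ` L" using x image_eqI[of \<zero> "(\<otimes>) x" \<zero>] Ld(2) by simp
  next
    fix a b assume "a \<in> (\<otimes>) x ` L" "b \<in> (\<otimes>) x ` L"
    then obtain la lb where "la \<in> L" "lb \<in> L" "a = x \<otimes> la" "b = x \<otimes> lb" by blast
    then show "a \<oplus> b \<in> (\<otimes>) x ` L"
      using x Ld(3) image_eqI[of _ "(\<otimes>) x" "la \<oplus> lb"] by (simp add: r_distr)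
  next
    fix a assume "a \<in> (\<otimes>) x ` L"
    then obtain la where "la \<in> L" "a = x \<otimes> la" by blast
    then show "\<ominus> a \<in> (\<otimes>) x ` L"
      using x Ld(4) image_eqI[of _ "(\<otimes>) x" "\<ominus> la"] by (simp add: r_minus)
  next
    fix a s assume "a \<in> (\<otimes>) x ` L" "s \<in> carrier R"
    then obtain la where "la \<in> L" "a = x \<otimes> la" "s \<in> carrier R" by blast
    then show "a \<otimes> s \<in> (\<otimes>) x ` L"
      using x Ld(5) image_eqI[of _ "(\<otimes>) x" "la \<otimes> s"] by (simp add: m_assoc)
  qed
qed

lemma (in ring) left_annihilator_ideal:
  assumes "K \<subseteq> carrier R" and "\<And>k s. k \<in> K \<Longrightarrow> s \<in> carrier R \<Longrightarrow> s \<otimes> k \<in> K"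
  shows "ideal {x \<in> carrier R. \<forall>k\<in>K. x \<otimes> k = \<zero>} R"
proof (rule idealI)
  show "subgroup {x \<in> carrier R. \<forall>k\<in>K. x \<otimes> k = \<zero>} (add_monoid R)"
    using assms(1) by (intro add.subgroupI) (auto simp: l_distr l_minus subset_iff a_inv_def[symmetric])
qed (use assms ring_axioms in \<open>auto simp: m_assoc subset_iff\<close>)

lemma (in ring) right_annihilator_ideal:
  assumes "L \<subseteq> carrier R" and "\<And>l s. l \<in> L \<Longrightarrow> s \<in> carrier R \<Longrightarrow> l \<otimes> s \<in> L"
  shows "ideal {x \<in> carrier R. \<forall>l\<in>L. l \<otimes> x = \<zero>} R"
proof (rule idealI)
  show "subgroup {x \<in> carrier R. \<forall>l\<in>L. l \<otimes> x = \<zero>} (add_monoid R)"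
    using assms(1) by (intro add.subgroupI) (auto simp: r_distr r_minus subset_iff a_inv_def[symmetric])
qed (use assms ring_axioms in \<open>auto simp: m_assoc[symmetric] subset_iff\<close>)

lemma (in ring) prime_ringD:
  assumes "prime_ring R" "ideal A R" "ideal B R" "\<And>a b. a \<in> A \<Longrightarrow> b \<in> B \<Longrightarrow> a \<otimes> b = \<zero>"
  shows "A \<subseteq> {\<zero>} \<or> B \<subseteq> {\<zero>}"
  using assms unfolding prime_ring_def prime_ideal_def by blast

lemma (in ring) prime_ring_left_annihilator_trivial:
  assumes "prime_ring R" "ideal I R" "k \<in> I" "k \<noteq> \<zero>"
    and "x \<in> carrier R" "\<And>i. i \<in> I \<Longrightarrow> x \<otimes> i = \<zero>"
  shows "x = \<zero>"
proof -
  have "ideal {x \<in> carrier R. \<forall>i\<in>I. x \<otimes> i = \<zero>} R"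
    using assms(2) by (intro left_annihilator_ideal) (auto intro: ideal.Icarr ideal.I_l_closed)
  from prime_ringD[OF assms(1) this assms(2)] show ?thesis
    using assms by blast
qed

lemma (in ring) prime_ring_right_annihilator_trivial:
  assumes "prime_ring R" "L \<subseteq> carrier R" "\<And>l s. l \<in> L \<Longrightarrow> s \<in> carrier R \<Longrightarrow> l \<otimes> s \<in> L"
    and "l \<in> L" "l \<noteq> \<zero>" "y \<in> carrier R" "\<And>l. l \<in> L \<Longrightarrow> l \<otimes> y = \<zero>"
  shows "y = \<zero>"
proof -
  let ?A = "{x \<in> carrier R. \<forall>l\<in>L. l \<otimes> x = \<zero>}"
  have A: "ideal ?A R" by (rule right_annihilator_ideal[OF assms(2,3)])
  have "ideal {x \<in> carrier R. \<forall>a\<in>?A. x \<otimes> a = \<zero>} R"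
    using ideal.I_l_closed[OF A] by (intro left_annihilator_ideal) blast+
  from prime_ringD[OF assms(1) this A] show ?thesis
    using assms by blast
qed

lemma (in ring) prime_ring_T_nilpotent_right_ideal_trivial:
  assumes pr: "prime_ring R" and one: "\<one> \<noteq> \<zero>"
    and J: "right_ideal J R" and tn: "T_nilpotent_for_right_modules J R"
  shows "J \<subseteq> {\<zero>}"
proof (rule ccontr)
  assume "\<not> J \<subseteq> {\<zero>}"
  then obtain a0 where a0: "a0 \<in> J" "a0 \<noteq> \<zero>" by blast
  note Jd = right_idealD[OF J]
  have "\<exists>a\<in>J. a \<otimes> y \<noteq> \<zero>" if "y \<in> carrier R - {\<zero>}" for y
    using prime_ring_right_annihilator_trivial[OF pr Jd(1) Jd(5) a0, of y] that by blast
  then obtain c where c: "\<And>y. y \<in> carrier R - {\<zero>} \<Longrightarrow> c y \<in> J \<and> c y \<otimes> y \<noteq> \<zero>"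
    using bchoice[of "carrier R - {\<zero>}" "\<lambda>y a. a \<in> J \<and> a \<otimes> y \<noteq> \<zero>"] by blast
  \<comment> \<open>Build a sequence in J whose partial products never vanish.\<close>
  define ys where "ys = rec_nat \<one> (\<lambda>_ y. c y \<otimes> y)"
  have ys_simps: "ys 0 = \<one>" "ys (Suc n) = c (ys n) \<otimes> ys n" for n
    unfolding ys_def by simp_all
  have ys: "ys n \<in> carrier R \<and> ys n \<noteq> \<zero>" for n
    by (induction n) (use one c Jd(1) in \<open>auto simp: ys_simps\<close>)
  define a where "a n = c (ys (n - 1))" for n
  have prod: "rprod R a n = ys n" for n
    by (induction n) (simp_all add: ys_simps a_def)
  have "\<forall>n\<ge>1. a n \<in> J"
    unfolding a_def using c ys by blast
  then obtain n where "rprod R a n = \<zero>"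
    using tn[unfolded T_nilpotent_for_right_modules_def, rule_format, of a] by blast
  with prod ys show False by simp
qed

lemma right_artinianD:
  assumes "right_artinian R" "\<And>n. right_ideal (f n) R" "\<And>n. f (Suc n) \<subseteq> f n"
  shows "\<exists>n. \<forall>m\<ge>n. f m = f n"
  by (rule assms(1)[unfolded right_artinian_def, rule_format]) (simp add: assms(2,3))

lemma (in ring) right_artinian_minimal_element:
  assumes "right_artinian R" "F \<noteq> {}" "\<And>K. K \<in> F \<Longrightarrow> right_ideal K R"
  obtains K where "K \<in> F" "\<And>K'. K' \<in> F \<Longrightarrow> K' \<subseteq> K \<Longrightarrow> K' = K"
proof -
  define r where "r = {(A, B). A \<in> F \<and> B \<in> F \<and> A \<subset> B}"
  have "\<nexists>f. \<forall>i. (f (Suc i), f i) \<in> r"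
  proof
    assume "\<exists>f. \<forall>i. (f (Suc i), f i) \<in> r"
    then obtain f where "\<forall>i. (f (Suc i), f i) \<in> r" ..
    then have f: "f i \<in> F" "f (Suc i) \<subset> f i" for i
      unfolding r_def by auto
    have "right_ideal (f n) R" "f (Suc n) \<subseteq> f n" for n
      using f assms(3) by auto
    then obtain n where n: "\<forall>m\<ge>n. f m = f n"
      using right_artinianD[OF assms(1)] by blast
    have "f (Suc n) = f n" by (rule n[rule_format]) simp
    with f(2)[of n] show False by simp
  qed
  then have "wf r"
    by (simp add: wf_iff_no_infinite_down_chain)
  obtain K0 where "K0 \<in> F" using assms(2) by blast
  then obtain K where K: "K \<in> F" "\<And>K'. (K', K) \<in> r \<Longrightarrow> K' \<notin> F"
    by (rule wfE_min[OF \<open>wf r\<close>]) blast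
  show thesis
  proof (rule that[OF K(1)])
    fix K' assume "K' \<in> F" "K' \<subseteq> K"
    with K show "K' = K" unfolding r_def by blast
  qed
qed

definition minimal_right_ideal :: "'a set \<Rightarrow> ('a, 'b) ring_scheme \<Rightarrow> bool" where
  "minimal_right_ideal L R \<longleftrightarrow> right_ideal L R \<and> (\<exists>x\<in>L. x \<noteq> \<zero>\<^bsub>R\<^esub>) \<and>
     (\<forall>K. right_ideal K R \<and> K \<subseteq> L \<and> (\<exists>x\<in>K. x \<noteq> \<zero>\<^bsub>R\<^esub>) \<longrightarrow> K = L)"

lemma (in ring) right_artinian_minimal_right_ideal:
  assumes "right_artinian R" "right_ideal N R" "x \<in> N" "x \<noteq> \<zero>"
  obtains L where "minimal_right_ideal L R" "L \<subseteq> N"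
proof -
  let ?F = "{K. right_ideal K R \<and> K \<subseteq> N \<and> (\<exists>x\<in>K. x \<noteq> \<zero>)}"
  have "N \<in> ?F" using assms(2-4) by auto
  then have "?F \<noteq> {}" by blast
  then obtain L where L: "L \<in> ?F" and min: "\<And>K. K \<in> ?F \<Longrightarrow> K \<subseteq> L \<Longrightarrow> K = L"
    by (rule right_artinian_minimal_element[OF assms(1)]) auto
  have "minimal_right_ideal L R"
    unfolding minimal_right_ideal_def
  proof (intro conjI allI impI)
    fix K assume K: "right_ideal K R \<and> K \<subseteq> L \<and> (\<exists>x\<in>K. x \<noteq> \<zero>)"
    show "K = L"
    proof (rule min)
      show "K \<in> ?F" using K L by auto
    qed (use K in simp)
  qed (use L in auto)
  with L that show thesis by simp
qed

lemma (in ring) minimal_right_ideal_subset_ideal: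
  assumes pr: "prime_ring R" and I: "ideal I R" "k \<in> I" "k \<noteq> \<zero>"
    and L: "minimal_right_ideal L R"
  shows "L \<subseteq> I"
proof -
  from L obtain l where l: "l \<in> L" "l \<noteq> \<zero>" and Lr: "right_ideal L R"
    unfolding minimal_right_ideal_def by blast
  have lc: "l \<in> carrier R" using l right_idealD(1)[OF Lr] by blast
  obtain i where i: "i \<in> I" "l \<otimes> i \<noteq> \<zero>"
    using prime_ring_left_annihilator_trivial[OF pr I lc] l(2) by blast
  have "l \<otimes> i \<in> L \<inter> I"
    using right_idealD(5)[OF Lr l(1)] ideal.I_l_closed[OF I(1) i(1) lc] ideal.Icarr[OF I(1) i(1)]
    by blast
  moreover have "right_ideal (L \<inter> I) R"
    by (rule right_ideal_Int[OF Lr right_ideal_if_ideal[OF I(1)]])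
  ultimately have "L \<inter> I = L"
    using L i(2) unfolding minimal_right_ideal_def by blast
  then show ?thesis by blast
qed

lemma (in ring) minimal_right_ideal_idempotent:
  assumes pr: "prime_ring R" and L: "minimal_right_ideal L R"
  obtains e where "e \<in> L" "e \<noteq> \<zero>" "e \<otimes> e = e"
proof -
  have Lr: "right_ideal L R" and min: "\<And>K. right_ideal K R \<Longrightarrow> K \<subseteq> L \<Longrightarrow> z \<in> K \<Longrightarrow> z \<noteq> \<zero> \<Longrightarrow> K = L"
    for z using L unfolding minimal_right_ideal_def by blast+
  note Ld = right_idealD[OF Lr]
  obtain l where l: "l \<in> L" "l \<noteq> \<zero>" using L unfolding minimal_right_ideal_def by blast
  have "\<exists>x\<in>L. x \<otimes> l \<noteq> \<zero>"
    using prime_ring_right_annihilator_trivial[OF pr Ld(1) Ld(5) l] l Ld(1) by blast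
  then obtain x where x: "x \<in> L" "x \<otimes> l \<noteq> \<zero>" by blast
  have xc: "x \<in> carrier R" using x(1) Ld(1) by blast
  have "(\<otimes>) x ` L = L"
    using min[OF right_ideal_left_mult_image[OF xc Lr], of "x \<otimes> l"] Ld(5)[OF x(1)] Ld(1) x l(1)
    by blast
  then obtain e where e: "e \<in> L" "x \<otimes> e = x" using x(1) by (metis imageE)
  have ec: "e \<in> carrier R" using e(1) Ld(1) by blast
  \<comment> \<open>The right ideal of elements of L killed by x is proper, hence zero.\<close>
  let ?N = "L \<inter> {z \<in> carrier R. x \<otimes> z = \<zero>}"
  have N: "right_ideal ?N R"
    by (rule right_ideal_Int[OF Lr right_ideal_right_annihilator_singleton[OF xc]])
  have N0: "z = \<zero>" if "z \<in> ?N" for z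
    using min[OF N _ that] x(2) l(1) by blast
  have "e \<otimes> e \<ominus> e \<in> ?N"
  proof
    show "e \<otimes> e \<ominus> e \<in> L" using Ld e(1) ec by (simp add: minus_eq)
    have "x \<otimes> (e \<otimes> e \<ominus> e) = (x \<otimes> e) \<otimes> e \<ominus> x \<otimes> e"
      using xc ec by (simp add: minus_eq r_distr r_minus m_assoc)
    also have "\<dots> = \<zero>" using e(2) xc by (simp add: minus_eq r_neg)
    finally show "e \<otimes> e \<ominus> e \<in> {z \<in> carrier R. x \<otimes> z = \<zero>}" using ec by simp
  qed
  then have "e \<otimes> e \<ominus> e = \<zero>" by (rule N0)
  then have "e \<otimes> e = e"
    using ec by (metis a_minus_def add.inv_closed add.inv_equality m_closed add.inv_inv)
  moreover have "e \<noteq> \<zero>" using e(2) x(2) xc l(1) Ld(1) by (auto simp: subset_iff)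
  ultimately show thesis using that e(1) by blast
qed

lemma (in ring) idempotent_orthogonal_sum:
  assumes c: "e \<in> carrier R" "f \<in> carrier R"
    and idem: "e \<otimes> e = e" "f \<otimes> f = f" and orth: "e \<otimes> f = \<zero>"
    and g: "g = e \<oplus> f \<oplus> \<ominus> (f \<otimes> e)"
  shows "g \<otimes> g = g" "e \<otimes> g = e" "g \<otimes> f = f"
proof -
  have gc: "g \<in> carrier R" using g c by simp
  show eg: "e \<otimes> g = e"
    unfolding g using c idem orth by (simp add: r_distr r_minus m_assoc[symmetric])
  show "g \<otimes> f = f"
    unfolding g using c idem orth by (simp add: l_distr l_minus m_assoc)
  have fg: "f \<otimes> g = f \<otimes> e \<oplus> f \<oplus> \<ominus> (f \<otimes> e)"
    unfolding g using c idem orth by (simp add: r_distr r_minus m_assoc[symmetric])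
  have "g \<otimes> g = (e \<oplus> f \<oplus> \<ominus> (f \<otimes> e)) \<otimes> g"
    by (simp only: g[symmetric])
  also have "\<dots> = e \<otimes> g \<oplus> f \<otimes> g \<oplus> \<ominus> (f \<otimes> (e \<otimes> g))"
    using c gc by (simp add: l_distr l_minus m_assoc)
  also have "\<dots> = g"
    unfolding eg fg using c by (simp add: g a_ac r_neg)
  finally show "g \<otimes> g = g" .
qed

lemma (in ring) idempotent_eq_one:
  assumes "e \<in> carrier R" "e \<otimes> e = e" "\<And>x. x \<in> carrier R \<Longrightarrow> e \<otimes> x = \<zero> \<Longrightarrow> x = \<zero>"
  shows "e = \<one>"
proof -
  have "e \<otimes> (\<one> \<ominus> e) = \<zero>"
    using assms(1,2) by (simp add: minus_eq r_distr r_minus r_neg)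
  then have "\<one> \<ominus> e = \<zero>" using assms(1,3) by simp
  then show ?thesis
    using assms(1) by (metis a_minus_def add.inv_closed add.inv_equality add.inv_inv one_closed)
qed

lemma (in ring) prime_right_artinian_idempotent_shrink_annihilator:
  assumes pr: "prime_ring R" and art: "right_artinian R"
    and I: "ideal I R" "k \<in> I" "k \<noteq> \<zero>" and e: "e \<in> I" "e \<otimes> e = e"
    and y: "y \<in> carrier R" "e \<otimes> y = \<zero>" "y \<noteq> \<zero>"
  obtains g where "g \<in> I" "g \<otimes> g = g"
    "{x \<in> carrier R. g \<otimes> x = \<zero>} \<subset> {x \<in> carrier R. e \<otimes> x = \<zero>}"
proof -
  let ?Z = "\<lambda>e. {x \<in> carrier R. e \<otimes> x = \<zero>}"
  have ec: "e \<in> carrier R" by (rule ideal.Icarr[OF I(1) e(1)])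
  obtain L where L: "minimal_right_ideal L R" "L \<subseteq> ?Z e"
    using right_artinian_minimal_right_ideal[OF art right_ideal_right_annihilator_singleton[OF ec]]
      y by blast
  obtain f where f: "f \<in> L" "f \<noteq> \<zero>" "f \<otimes> f = f"
    using minimal_right_ideal_idempotent[OF pr L(1)] by blast
  have fI: "f \<in> I" using minimal_right_ideal_subset_ideal[OF pr I L(1)] f(1) by blast
  have fc: "f \<in> carrier R" and ef: "e \<otimes> f = \<zero>" using f(1) L(2) by auto
  define g where "g = e \<oplus> f \<oplus> \<ominus> (f \<otimes> e)"
  note g = idempotent_orthogonal_sum[OF ec fc e(2) f(3) ef g_def]
  have gI: "g \<in> I"
    unfolding g_def using I(1) e(1) fI ec
    by (meson additive_subgroup.a_closed additive_subgroup.a_inv_closed ideal.I_r_closed ideal_def)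
  have "?Z g \<subseteq> ?Z e"
  proof
    fix x assume x: "x \<in> ?Z g"
    have "e \<otimes> x = e \<otimes> (g \<otimes> x)"
      using g(2) ec ideal.Icarr[OF I(1) gI] x by (metis (no_types, lifting) mem_Collect_eq m_assoc)
    then show "x \<in> ?Z e" using x ec by simp
  qed
  moreover have "f \<in> ?Z e" "f \<notin> ?Z g" using f fc ef g(3) by auto
  ultimately show thesis using that gI g(1) by blast
qed

text \<open>An idempotent of I with minimal right annihilator has no right annihilator at all,
  so it is 1.\<close>

lemma (in ring) prime_right_artinian_one_in_ideal:
  assumes pr: "prime_ring R" and art: "right_artinian R"
    and I: "ideal I R" "k \<in> I" "k \<noteq> \<zero>"
  shows "\<one> \<in> I"
proof -
  let ?Z = "\<lambda>e. {x \<in> carrier R. e \<otimes> x = \<zero>}"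
  let ?F = "{?Z e | e. e \<in> I \<and> e \<otimes> e = e}"
  have "?Z \<zero> \<in> ?F" using additive_subgroup.zero_closed[OF ideal.axioms(1)[OF I(1)]] by auto
  then have "?F \<noteq> {}" by blast
  then obtain K where "K \<in> ?F" and Kmin: "\<And>K'. K' \<in> ?F \<Longrightarrow> K' \<subseteq> K \<Longrightarrow> K' = K"
    by (rule right_artinian_minimal_element[OF art])
      (use right_ideal_right_annihilator_singleton ideal.Icarr[OF I(1)] in blast)+
  then obtain e where e: "e \<in> I" "e \<otimes> e = e" and K: "K = ?Z e" by blast
  have "y = \<zero>" if "y \<in> carrier R" "e \<otimes> y = \<zero>" for y
  proof (rule ccontr)
    assume "y \<noteq> \<zero>"
    with prime_right_artinian_idempotent_shrink_annihilator[OF pr art I e that]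
    obtain g where "g \<in> I" "g \<otimes> g = g" "?Z g \<subset> ?Z e" by blast
    then show False using Kmin[of "?Z g"] K by blast
  qed
  then have "e = \<one>" by (rule idempotent_eq_one[OF ideal.Icarr[OF I(1) e(1)] e(2)])
  then show ?thesis using e(1) by simp
qed

lemma (in ring_hom_ring) right_ideal_image:
  assumes surj: "h ` carrier R = carrier S" and I: "right_ideal I R"
  shows "right_ideal (h ` I) S"
  unfolding right_ideal_def
proof
  note Id = R.right_idealD[OF I]
  show "additive_subgroup (h ` I) S"
    using img_is_add_subgroup I unfolding right_ideal_def additive_subgroup_def by blast
  show "\<forall>a\<in>h ` I. \<forall>y\<in>carrier S. a \<otimes>\<^bsub>S\<^esub> y \<in> h ` I"
  proof (intro ballI)
    fix a y assume a: "a \<in> h ` I" and "y \<in> carrier S"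
    then have "y \<in> h ` carrier R" using surj by simp
    with a obtain i x where ix: "i \<in> I" "x \<in> carrier R" and "a = h i" "y = h x"
      by blast
    then have "a \<otimes>\<^bsub>S\<^esub> y = h (i \<otimes> x)"
      using Id(1) by (simp add: subset_iff)
    then show "a \<otimes>\<^bsub>S\<^esub> y \<in> h ` I"
      using Id(5)[OF ix] by blast
  qed
qed

lemma (in ring_hom_ring) right_artinian_if_bij:
  assumes bij: "bij_betw h (carrier R) (carrier S)" and art: "right_artinian S"
  shows "right_artinian R"
  unfolding right_artinian_def
proof (intro allI impI)
  fix f :: "nat \<Rightarrow> 'a set"
  assume f: "(\<forall>n. right_ideal (f n) R) \<and> (\<forall>n. f (Suc n) \<subseteq> f n)"
  have "right_ideal (h ` f n) S" for n
    using right_ideal_image[OF bij_betw_imp_surj_on[OF bij]] f by blast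
  moreover have "h ` f (Suc n) \<subseteq> h ` f n" for n
    using f by (simp add: image_mono)
  ultimately obtain n where n: "\<forall>m\<ge>n. h ` f m = h ` f n"
    using right_artinianD[OF art, of "\<lambda>n. h ` f n"] by blast
  have "f k \<subseteq> carrier R" for k using f R.right_idealD(1) by blast
  then have inj: "h ` f m = h ` f n \<Longrightarrow> f m = f n" for m
    using bij_betw_imp_inj_on[OF bij] by (simp add: inj_on_image_eq_iff)
  show "\<exists>n. \<forall>m\<ge>n. f m = f n"
    using inj n by blast
qed

lemma (in ring) right_artinian_Quot_zero:
  assumes "right_artinian (R Quot {\<zero>})"
  shows "right_artinian R"
proof -
  obtain h where "h \<in> ring_iso R (R Quot {\<zero>})"
    using FactRing_zeroideal(2) unfolding is_ring_iso_def by blast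
  then have h: "h \<in> ring_hom R (R Quot {\<zero>})" "bij_betw h (carrier R) (carrier (R Quot {\<zero>}))"
    unfolding ring_iso_def by auto
  interpret ring_hom_ring R "R Quot {\<zero>}" h
    using ring_hom_ringI2[OF ring_axioms ideal.quotient_is_ring[OF zeroideal] h(1)] .
  show ?thesis by (rule right_artinian_if_bij[OF h(2) assms])
qed

lemma (in ring) prime_right_perfect_right_artinian:
  assumes pr: "prime_ring R" and one: "\<one> \<noteq> \<zero>" and rp: "right_perfect R"
  shows "right_artinian R"
proof -
  have "jacobson R \<subseteq> {\<zero>}"
    using prime_ring_T_nilpotent_right_ideal_trivial[OF pr one right_ideal_jacobson] rp
    unfolding right_perfect_def by blast
  then have "jacobson R = {\<zero>}" using zero_in_jacobson by blast
  then have "right_artinian (R Quot {\<zero>})"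
    using rp unfolding right_perfect_def semilocal_def semisimple_artinian_def by simp
  then show ?thesis by (rule right_artinian_Quot_zero)
qed

lemma (in ideal) Quot_one_neq_zero:
  assumes "I \<noteq> carrier R"
  shows "\<one>\<^bsub>R Quot I\<^esub> \<noteq> \<zero>\<^bsub>R Quot I\<^esub>"
proof
  assume "\<one>\<^bsub>R Quot I\<^esub> = \<zero>\<^bsub>R Quot I\<^esub>"
  then have "I +> \<one> = I" unfolding FactRing_def by simp
  then have "\<one> \<in> I" by (rule rcos_const_imp_mem[OF one_closed])
  with assms show False using one_imp_carrier by blast
qed

lemma (in ring) prime_ring_Quot:
  assumes P: "prime_ideal P R"
  shows "prime_ring (R Quot P)"
proof -
  have PI: "ideal P R" and Pne: "P \<noteq> carrier R" using P unfolding prime_ideal_def by auto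
  interpret P: ideal P R by (rule PI)
  let ?S = "R Quot P"
  interpret S: ring ?S by (rule P.quotient_is_ring)
  interpret H: ring_hom_ring R ?S "(+>) P" by (rule P.rcos_ring_hom_ring)
  have zero: "\<zero>\<^bsub>?S\<^esub> = P" unfolding FactRing_def by simp
  have carrier: "carrier ?S = (+>) P ` carrier R"
    unfolding FactRing_def A_RCOSETS_def' by auto
  have rcos_eq_zero: "P +> x = P \<longleftrightarrow> x \<in> P" if "x \<in> carrier R" for x
    using P.rcos_const_imp_mem[OF that] a_rcos_zero[OF PI] by blast
  have zero_if_vimage: "A \<subseteq> {\<zero>\<^bsub>?S\<^esub>}" if "ideal A ?S" "{r \<in> carrier R. P +> r \<in> A} \<subseteq> P" for A
  proof
    fix z assume "z \<in> A"
    then have "z \<in> (+>) P ` carrier R" using ideal.Icarr[OF that(1)] carrier by blast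
    then obtain r where "r \<in> carrier R" "z = P +> r" by blast
    with \<open>z \<in> A\<close> that(2) rcos_eq_zero show "z \<in> {\<zero>\<^bsub>?S\<^esub>}" unfolding zero by blast
  qed
  show ?thesis
    unfolding prime_ring_def prime_ideal_def
  proof (intro conjI allI impI)
    show "ideal {\<zero>\<^bsub>?S\<^esub>} ?S" by (rule S.zeroideal)
    show "{\<zero>\<^bsub>?S\<^esub>} \<noteq> carrier ?S"
      using P.Quot_one_neq_zero[OF Pne] S.one_closed by blast
    fix A B
    assume AB: "ideal A ?S \<and> ideal B ?S \<and> (\<forall>a\<in>A. \<forall>b\<in>B. a \<otimes>\<^bsub>?S\<^esub> b \<in> {\<zero>\<^bsub>?S\<^esub>})"
    let ?A = "{r \<in> carrier R. P +> r \<in> A}" and ?B = "{r \<in> carrier R. P +> r \<in> B}"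
    have "ideal ?A R" "ideal ?B R" using AB H.ideal_vimage by auto
    moreover have "a \<otimes> b \<in> P" if "a \<in> ?A" "b \<in> ?B" for a b
      using that AB rcos_eq_zero[of "a \<otimes> b"] unfolding zero by (auto simp: H.hom_mult)
    ultimately have "?A \<subseteq> P \<or> ?B \<subseteq> P"
      using P unfolding prime_ideal_def by blast
    then show "A \<subseteq> {\<zero>\<^bsub>?S\<^esub>} \<or> B \<subseteq> {\<zero>\<^bsub>?S\<^esub>}"
      using AB zero_if_vimage by blast
  qed
qed

lemma (in ring) maximal_two_sided_ideal_if_Quot_simple:
  assumes P: "ideal P R" "P \<noteq> carrier R"
    and simple: "\<And>A. ideal A (R Quot P) \<Longrightarrow> A \<subseteq> {\<zero>\<^bsub>R Quot P\<^esub>} \<or> \<one>\<^bsub>R Quot P\<^esub> \<in> A"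
  shows "maximal_two_sided_ideal P R"
  unfolding maximal_two_sided_ideal_def
proof (intro conjI allI impI)
  fix I assume I: "ideal I R \<and> P \<subseteq> I"
  then have IP: "ideal ((+>) P ` I) (R Quot P)" by (intro ring_ideal_imp_quot_ideal[OF P(1)]) blast
  then consider "(+>) P ` I \<subseteq> {\<zero>\<^bsub>R Quot P\<^esub>}" | "P +> \<one> \<in> (+>) P ` I"
    using simple unfolding FactRing_def by fastforce
  then show "I = P \<or> I = carrier R"
  proof cases
    case 1
    have "I \<subseteq> P"
    proof
      fix x assume "x \<in> I"
      with 1 have "P +> x = P" unfolding FactRing_def by auto
      then show "x \<in> P"
        using ideal.rcos_const_imp_mem[OF P(1)] ideal.Icarr[OF conjunct1[OF I] \<open>x \<in> I\<close>] by blast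
    qed
    then show ?thesis using I by blast
  next
    case 2
    have "I = \<Union> ((+>) P ` I)" using ideal_incl_iff[OF P(1)] I by blast
    moreover have "(+>) P ` I \<subseteq> carrier (R Quot P)" using ideal.Icarr[OF IP] by blast
    ultimately have "\<one> \<in> I"
      using 2 canonical_proj_vimage_mem_iff[OF P(1), of "(+>) P ` I" \<one>] by simp
    then show ?thesis using ideal.one_imp_carrier I by blast
  qed
qed (use P in auto)

lemma (in ring) prime_ideal_maximal_if_right_almost_perfect:
  assumes rap: "right_almost_perfect R" and P: "prime_ideal P R" "P \<noteq> {\<zero>}"
  shows "maximal_two_sided_ideal P R"
proof -
  have PI: "ideal P R" and Pne: "P \<noteq> carrier R" using P(1) unfolding prime_ideal_def by auto
  interpret P: ideal P R by (rule PI)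
  interpret S: ring "R Quot P" by (rule P.quotient_is_ring)
  have pr: "prime_ring (R Quot P)" by (rule prime_ring_Quot[OF P(1)])
  have one: "\<one>\<^bsub>R Quot P\<^esub> \<noteq> \<zero>\<^bsub>R Quot P\<^esub>" by (rule P.Quot_one_neq_zero[OF Pne])
  have "right_perfect (R Quot P)" using rap P(2) PI Pne unfolding right_almost_perfect_def by blast
  then have art: "right_artinian (R Quot P)"
    by (rule S.prime_right_perfect_right_artinian[OF pr one])
  show ?thesis
    using PI Pne S.prime_right_artinian_one_in_ideal[OF pr art]
    by (intro maximal_two_sided_ideal_if_Quot_simple) blast+
qed

theorem corollary3p4:
  fixes R :: "('a, 'b) ring_scheme"
  assumes "ring R"
    and "\<one>\<^bsub>R\<^esub> \<noteq> \<zero>\<^bsub>R\<^esub>"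
    and "prime_ring R"
    and "right_almost_perfect R"
  shows "h_local R"
  unfolding h_local_def
proof (intro conjI allI impI)
  fix I assume "ideal I R \<and> I \<noteq> {\<zero>\<^bsub>R\<^esub>} \<and> I \<noteq> carrier R"
  then show "semilocal (R Quot I)"
    using assms(4) unfolding right_almost_perfect_def right_perfect_def by blast
next
  fix P assume "prime_ideal P R \<and> P \<noteq> {\<zero>\<^bsub>R\<^esub>}"
  then have "maximal_two_sided_ideal P R"
    using ring.prime_ideal_maximal_if_right_almost_perfect[OF assms(1,4)] by blast
  then show "\<exists>!M. maximal_two_sided_ideal M R \<and> P \<subseteq> M"
    unfolding maximal_two_sided_ideal_def by blast
qed

end
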